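(* Let $\beta>0$ and let $g=\phi^2 g_{flat}$ be an $H_\beta$-invariant Riemannian metric on the flat Klein bottle $K_\beta$ such that $\mathrm{sys}(K_\beta,g)=\pi$. Then, viewing $\phi$ and $\phi_\beta$ as functions of $y\in[0,\beta]$, $$\int_0^\beta\phi(y)\phi_\beta(y)\,dy\ge\int_0^\beta\phi_\beta^2(y)\,dy.$$
   Context: For $\beta>0$ let $\Gamma_\beta$ be the group of isometries of the Euclidean plane generated by $A(x,y)=(x+\pi,-y)$ and $B(x,y)=(x,y+4\beta)$; $K_\beta=\mathbb{R}^2/\Gamma_\beta$ with the induced flat metric $g_{flat}$; functions on $K_\beta$ are identified with $\Gamma_\beta$-invariant functions on $\mathbb{R}^2$. $H_\beta=\mathrm{Isom}(K_\beta,g_{flat})$; a function $\phi$ is $H_\beta$-invariant precisely when it is independent of $x$ and $\phi(y)=\phi(-y)=\phi(y+2\beta)$, so it is determined by its restriction to $[0,\beta]$, and any function on $[0,\beta]$ extends by these rules to a continuous function on $K_\beta$. Let $\phi_0(y)=\frac{2e^y}{1+e^{2y}}$, $\beta_0=\log(1+\sqrt2)$, $\beta_1=\log(2+\sqrt3)$. Define $\phi_\beta$ on $[0,\beta]$: if $\beta\le\pi/4$, $\phi_\beta\equiv\frac{\pi}{4\beta}$; if $\pi/4<\beta<\beta_0$, $\phi_\beta(y)=\phi_0(y)$ for $y\le s_\beta$ and $\phi_0(s_\beta)$ for $y>s_\beta$, where $s_\beta$ is the unique $s\in(0,\beta)$ with $\int_0^s\phi_0(y)dy+(\beta-s)\phi_0(s)=\pi/4$;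 if $\beta_0\le\beta\le\beta_1$, $\phi_\beta=\phi_0$; if $\beta>\beta_1$, $\phi_\beta(y)=\phi_0(y)$ for $y\le\beta_1$ and $\frac12$ for $y>\beta_1$. $\mathrm{sys}(K_\beta,g)$ is the infimum of $g$-lengths of noncontractible closed curves in $K_\beta$. *)

theory Defs
  imports "HOL-Analysis.Analysis"
begin

text \<open>Points of the plane are pairs (x,y). Elements of Gamma_beta are exactly
  B^m A^k : (x,y) |-> (x + k pi, (-1)^k y + 4 beta m), k,m integers.\<close>
definition deck :: "real \<Rightarrow> int \<Rightarrow> int \<Rightarrow> real \<times> real \<Rightarrow> real \<times> real" where
  "deck \<beta> k m p = (fst p + of_int k * pi, (-1) powi k * snd p + 4 * \<beta> * of_int m)"

definition conf_length :: "(real \<Rightarrow> real) \<Rightarrow> (real \<Rightarrow> real \<times> real) \<Rightarrow> real \<Rightarrow> bool" where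
  "conf_length \<phi> \<gamma> l \<longleftrightarrow>
     ((\<lambda>t. \<phi> (snd (\<gamma> t)) * norm (vector_derivative \<gamma> (at t))) has_integral l) {0..1}"

text \<open>A noncontractible closed curve in K_beta lifts to a path gamma in the plane with
  gamma(1) = T(gamma(0)) for a nontrivial deck transformation T.\<close>
definition noncontr_loop :: "real \<Rightarrow> (real \<Rightarrow> real \<times> real) \<Rightarrow> bool" where
  "noncontr_loop \<beta> \<gamma> \<longleftrightarrow> \<gamma> piecewise_C1_differentiable_on {0..1} \<and>
     (\<exists>k m. (k, m) \<noteq> (0, 0) \<and> \<gamma> 1 = deck \<beta> k m (\<gamma> 0))"

definition sys :: "real \<Rightarrow> (real \<Rightarrow> real) \<Rightarrow> real" where
  "sys \<beta> \<phi> = Inf {l. \<exists>\<gamma>. noncontr_loop \<beta> \<gamma> \<and> conf_length \<phi> \<gamma> l}"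

definition smooth_fun :: "(real \<Rightarrow> real) \<Rightarrow> bool" where
  "smooth_fun f \<longleftrightarrow> (\<forall>n. (deriv ^^ n) f differentiable_on UNIV)"

definition H_invariant :: "real \<Rightarrow> (real \<Rightarrow> real) \<Rightarrow> bool" where
  "H_invariant \<beta> \<phi> \<longleftrightarrow> (\<forall>y. \<phi> y = \<phi> (- y) \<and> \<phi> y = \<phi> (y + 2 * \<beta>))"

definition phi0 :: "real \<Rightarrow> real" where
  "phi0 y = 2 * exp y / (1 + exp (2 * y))"

definition beta0 :: real where "beta0 = ln (1 + sqrt 2)"
definition beta1 :: real where "beta1 = ln (2 + sqrt 3)"

definition s_beta :: "real \<Rightarrow> real" where
  "s_beta \<beta> = (THE s. 0 < s \<and> s < \<beta> \<and> integral {0..s} phi0 + (\<beta> - s) * phi0 s = pi / 4)"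

definition phi_beta :: "real \<Rightarrow> real \<Rightarrow> real" where
  "phi_beta \<beta> y =
     (if \<beta> \<le> pi / 4 then pi / (4 * \<beta>)
      else if \<beta> < beta0 then (if y \<le> s_beta \<beta> then phi0 y else phi0 (s_beta \<beta>))
      else if \<beta> \<le> beta1 then phi0 y
      else if y \<le> beta1 then phi0 y else 1 / 2)"

end

theory Submission
  imports Defs
begin

(* In the coordinate t = tanh y one has phi0 = sqrt (1 - t^2), and phi0^2 g_flat is the round
   unit sphere in Mercator coordinates.  For 0 < r < 1, half of the great circle of maximal height
   tanh y = r joins (-pi/2, -artanh r) to (pi/2, artanh r), so it closes up under the glide
   reflection A and is a noncontractible loop of K_beta.  Its g-length is
   int_{-r}^{r} G(t) / sqrt (r^2 - t^2) dt, where G = phi / phi0 is written in t, so sys = pi and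
   evenness give the Abel-type inequalities int_0^r G(t) / sqrt (r^2 - t^2) dt >= pi/2.
   Integrating them against a weight w(r) over [0, T] and exchanging the order of integration
   gives int_0^T G K >= pi/2 int_0^T w, K being the Abel transform of w.  The weights
   r / sqrt (T^2 - r^2) and r sqrt (T^2 - r^2) / (1 - r^2) turn this into
   int_0^a phi phi0 >= int_0^a phi0^2 and into a lower bound for
   int_0^a phi phi0 - phi0 a * int_0^a phi.  With phi >= 1/2 (horizontal loops) and
   int_0^beta phi >= pi/4 (the vertical loop) this handles each of the four regimes of phi_beta. *)

lemma smooth_fun_imp_continuous: "smooth_fun f \<Longrightarrow> continuous_on UNIV f"
  unfolding smooth_fun_def by (metis differentiable_imp_continuous_on funpow_0)

lemma conf_lengthI:
  assumes "\<And>t. t \<in> {0..1} \<Longrightarrow> (\<gamma> has_vector_derivative \<gamma>' t) (at t)"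
    and "((\<lambda>t. \<phi> (snd (\<gamma> t)) * norm (\<gamma>' t)) has_integral l) {0..1}"
  shows "conf_length \<phi> \<gamma> l"
  unfolding conf_length_def
  by (rule has_integral_eq[OF _ assms(2)]) (simp add: vector_derivative_at[OF assms(1)])

lemma noncontr_loopI:
  assumes "\<And>t. (\<gamma> has_vector_derivative \<gamma>' t) (at t)" "continuous_on UNIV \<gamma>'"
    and "(k, m) \<noteq> (0, 0)" "\<gamma> 1 = deck \<beta> k m (\<gamma> 0)"
  shows "noncontr_loop \<beta> \<gamma>"
proof -
  have "\<gamma> C1_differentiable_on {0..1}"
    unfolding C1_differentiable_on_def using assms(1,2) continuous_on_subset by blast
  then show ?thesis
    unfolding noncontr_loop_def using C1_differentiable_imp_piecewise assms(3,4) by blast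
qed

lemma sys_le_conf_length:
  assumes "\<And>y. 0 < \<phi> y" and "noncontr_loop \<beta> \<gamma>" "conf_length \<phi> \<gamma> l"
  shows "sys \<beta> \<phi> \<le> l"
proof -
  let ?S = "{l. \<exists>\<gamma>. noncontr_loop \<beta> \<gamma> \<and> conf_length \<phi> \<gamma> l}"
  have "bdd_below ?S"
  proof (rule bdd_belowI[of _ 0])
    fix x assume "x \<in> ?S"
    then obtain \<gamma> where "conf_length \<phi> \<gamma> x" by auto
    then show "0 \<le> x"
      unfolding conf_length_def by (rule has_integral_nonneg) (simp add: assms(1) less_imp_le)
  qed
  moreover have "l \<in> ?S" using assms(2,3) by auto
  ultimately show ?thesis unfolding sys_def by (simp add: cInf_lower)
qed

lemma integral_periodic_shift:
  fixes f :: "real \<Rightarrow> real"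
  assumes "\<And>x. f (x + p) = f x"
  shows "integral {a + p..b + p} f = integral {a..b} f"
  using integral_shift_real_ivl[of "a + p" p "b + p" f] by (simp add: assms)

lemma integral_even_reflect:
  fixes f :: "real \<Rightarrow> real"
  assumes "\<And>x. f (- x) = f x"
  shows "integral {-b..-a} f = integral {a..b} f"
  using Henstock_Kurzweil_Integration.integral_reflect_real[of b a f] by (simp add: assms)

locale systolic_conformal_metric =
  fixes \<beta> :: real and \<phi> :: "real \<Rightarrow> real"
  assumes beta_pos: "0 < \<beta>"
    and continuous: "continuous_on UNIV \<phi>"
    and positive: "0 < \<phi> y"
    and even: "\<phi> (- y) = \<phi> y"
    and periodic: "\<phi> (y + 2 * \<beta>) = \<phi> y"
    and loop_length_ge: "noncontr_loop \<beta> \<gamma> \<Longrightarrow> conf_length \<phi> \<gamma> l \<Longrightarrow> pi \<le> l"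
begin

lemma continuous_on_phi: "continuous_on S \<phi>"
  using continuous continuous_on_subset by blast

lemma integrable_phi: "\<phi> integrable_on {a..b}"
  by (rule integrable_continuous_real[OF continuous_on_phi])

lemma phi_ge_half: "1 / 2 \<le> \<phi> y"
proof -
  define \<gamma> where "\<gamma> = (\<lambda>t::real. (2 * pi * t, y))"
  have d: "(\<gamma> has_vector_derivative (2 * pi, 0)) (at t)" for t
    unfolding \<gamma>_def by (auto intro!: derivative_eq_intros simp: has_vector_derivative_def)
  have "noncontr_loop \<beta> \<gamma>"
    by (rule noncontr_loopI[OF d, where k = 2 and m = 0]) (auto simp: \<gamma>_def deck_def)
  moreover have "conf_length \<phi> \<gamma> (2 * pi * \<phi> y)"
    by (rule conf_lengthI[OF d]) (use has_integral_const_real[of "\<phi> y * 2 * pi" 0 1] in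
        \<open>simp add: \<gamma>_def algebra_simps\<close>)
  ultimately have "pi \<le> 2 * pi * \<phi> y" by (rule loop_length_ge)
  then show ?thesis by simp
qed

lemma integral_four_beta: "integral {0..4 * \<beta>} \<phi> = 4 * integral {0..\<beta>} \<phi>"
proof -
  have "integral {\<beta>..2 * \<beta>} \<phi> = integral {-\<beta>..0} \<phi>"
    using integral_periodic_shift[of \<phi> "2 * \<beta>" "-\<beta>" 0] periodic by simp
  also have "\<dots> = integral {0..\<beta>} \<phi>"
    using integral_even_reflect[where f = \<phi> and a = 0 and b = \<beta>] even by simp
  finally have "integral {0..2 * \<beta>} \<phi> = 2 * integral {0..\<beta>} \<phi>"
    using Henstock_Kurzweil_Integration.integral_combine[of 0 \<beta> "2 * \<beta>" \<phi>] integrable_phi beta_pos by simp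
  moreover have "integral {2 * \<beta>..4 * \<beta>} \<phi> = integral {0..2 * \<beta>} \<phi>"
    using integral_periodic_shift[of \<phi> "2 * \<beta>" 0 "2 * \<beta>"] periodic by simp
  ultimately show ?thesis
    using Henstock_Kurzweil_Integration.integral_combine[of 0 "2 * \<beta>" "4 * \<beta>" \<phi>] integrable_phi beta_pos by simp
qed

lemma integral_phi_ge: "pi / 4 \<le> integral {0..\<beta>} \<phi>"
proof -
  define \<gamma> where "\<gamma> = (\<lambda>t::real. (0::real, 4 * \<beta> * t))"
  have d: "(\<gamma> has_vector_derivative (0, 4 * \<beta>)) (at t)" for t
    unfolding \<gamma>_def by (auto intro!: derivative_eq_intros simp: has_vector_derivative_def)
  have "noncontr_loop \<beta> \<gamma>"
    by (rule noncontr_loopI[OF d, where k = 0 and m = 1]) (auto simp: \<gamma>_def deck_def)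
  moreover have "((\<lambda>t. (4 * \<beta>) *\<^sub>R \<phi> (4 * \<beta> * t)) has_integral integral {0..4 * \<beta>} \<phi>) {0..1}"
    using has_integral_substitution[of 0 1 "\<lambda>t. 4 * \<beta> * t" 0 "4 * \<beta>" \<phi> "\<lambda>_. 4 * \<beta>"] beta_pos
    by (auto intro!: continuous_on_phi derivative_eq_intros)
  then have "conf_length \<phi> \<gamma> (integral {0..4 * \<beta>} \<phi>)"
    by (intro conf_lengthI[OF d]) (use beta_pos in \<open>simp add: \<gamma>_def mult.commute\<close>)
  ultimately have "pi \<le> integral {0..4 * \<beta>} \<phi>" by (rule loop_length_ge)
  then show ?thesis unfolding integral_four_beta by simp
qed

end

section \<open>Half great circles\<close>

(* A continuous branch of arctan (c * tan \<theta>): it coincides with it on ]-pi/2, pi/2[ since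
   tan (\<theta> - arctan (c * tan \<theta>)) = (1 - c) sin \<theta> cos \<theta> / (cos\<^sup>2 \<theta> + c sin\<^sup>2 \<theta>). *)
definition arctan_scaled_tan :: "real \<Rightarrow> real \<Rightarrow> real" where
  "arctan_scaled_tan c \<theta> =
     \<theta> - arctan ((1 - c) * sin \<theta> * cos \<theta> / ((cos \<theta>)\<^sup>2 + c * (sin \<theta>)\<^sup>2))"

lemma cos_squared_add_mult_sin_squared_pos:
  assumes "(c::real) > 0"
  shows "(cos \<theta>)\<^sup>2 + c * (sin \<theta>)\<^sup>2 > 0"
proof -
  have "sin \<theta> \<noteq> 0 \<or> cos \<theta> \<noteq> 0"
    using sin_cos_squared_add[of \<theta>] by (metis add_0 power_zero_numeral zero_neq_one)
  then show ?thesis using assms by (auto intro: add_pos_nonneg add_nonneg_pos)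
qed

lemma arctan_scaled_tan_has_real_derivative:
  assumes c: "c > 0"
  shows "(arctan_scaled_tan c has_real_derivative c / ((cos \<theta>)\<^sup>2 + c\<^sup>2 * (sin \<theta>)\<^sup>2)) (at \<theta>)"
proof -
  define s k where "s = sin \<theta>" and "k = cos \<theta>"
  have sk: "s\<^sup>2 + k\<^sup>2 = 1" unfolding s_def k_def by simp
  define M N where "M = k\<^sup>2 + c * s\<^sup>2" and "N = (1 - c) * s * k"
  have M: "M > 0" using cos_squared_add_mult_sin_squared_pos[OF c] unfolding M_def s_def k_def .
  have M2: "k\<^sup>2 + c\<^sup>2 * s\<^sup>2 > 0"
    using cos_squared_add_mult_sin_squared_pos[of "c\<^sup>2"] c unfolding s_def k_def by simp
  have dN: "((\<lambda>\<theta>. (1 - c) * sin \<theta> * cos \<theta>) has_real_derivative (1 - c) * (k\<^sup>2 - s\<^sup>2)) (at \<theta>)"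
    unfolding s_def k_def by (auto intro!: derivative_eq_intros simp: algebra_simps power2_eq_square)
  have dM: "((\<lambda>\<theta>. (cos \<theta>)\<^sup>2 + c * (sin \<theta>)\<^sup>2) has_real_derivative 2 * (c - 1) * s * k) (at \<theta>)"
    unfolding s_def k_def by (auto intro!: derivative_eq_intros simp: algebra_simps power2_eq_square)
  define D where "D = ((1 - c) * (k\<^sup>2 - s\<^sup>2) * M - N * (2 * (c - 1) * s * k)) / (M * M)"
  have "(arctan_scaled_tan c has_real_derivative 1 - inverse (1 + (N / M)\<^sup>2) * D) (at \<theta>)"
    unfolding arctan_scaled_tan_def[abs_def]
    using DERIV_diff[OF DERIV_ident DERIV_chain2[OF DERIV_arctan DERIV_divide[OF dN dM]]] M
    unfolding D_def M_def N_def s_def k_def by simp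
  moreover have "1 - inverse (1 + (N / M)\<^sup>2) * D = c / (k\<^sup>2 + c\<^sup>2 * s\<^sup>2)"
  proof -
    have "M\<^sup>2 + N\<^sup>2 = k\<^sup>2 + c\<^sup>2 * s\<^sup>2" unfolding M_def N_def using sk by algebra
    then have i: "inverse (1 + (N / M)\<^sup>2) = M\<^sup>2 / (k\<^sup>2 + c\<^sup>2 * s\<^sup>2)"
      using M by (simp add: field_simps power2_eq_square)
    have "(1 - c) * (k\<^sup>2 - s\<^sup>2) * M - N * (2 * (c - 1) * s * k) = (1 - c) * (k\<^sup>2 - c * s\<^sup>2)"
      unfolding M_def N_def using sk by algebra
    then have "inverse (1 + (N / M)\<^sup>2) * D = (1 - c) * (k\<^sup>2 - c * s\<^sup>2) / (k\<^sup>2 + c\<^sup>2 * s\<^sup>2)"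
      unfolding i D_def using M by (simp add: power2_eq_square)
    moreover have "k\<^sup>2 + c\<^sup>2 * s\<^sup>2 - (1 - c) * (k\<^sup>2 - c * s\<^sup>2) = c" using sk by algebra
    ultimately show ?thesis using M2 by (simp add: field_simps)
  qed
  ultimately show ?thesis unfolding s_def k_def by simp
qed

(* For 0 < r < 1: half of the great circle of the sphere phi0^2 g_flat whose highest point has
   tanh y = r, parametrised by [0, 1]. *)
definition great_circle :: "real \<Rightarrow> real \<Rightarrow> real \<times> real" where
  "great_circle r \<tau> =
     (arctan_scaled_tan (sqrt (1 - r\<^sup>2)) (pi * \<tau> - pi / 2), artanh (r * sin (pi * \<tau> - pi / 2)))"

lemma one_minus_sq_mult_sin_sq_pos:
  assumes "0 < (r::real)" "r < 1" shows "0 < 1 - r\<^sup>2 * (sin \<theta>)\<^sup>2"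
proof -
  have "(sin \<theta>)\<^sup>2 \<le> 1" "r\<^sup>2 < 1" using assms by (simp_all add: sin_squared_eq power_less_one_iff)
  then show ?thesis by (smt (verit) mult_left_le zero_le_power2)
qed

lemma abs_mult_sin_less_one:
  assumes "0 < (r::real)" "r < 1" shows "\<bar>r * sin \<theta>\<bar> < 1"
proof -
  have "\<bar>r * sin \<theta>\<bar> \<le> r"
    using assms abs_sin_le_one[of \<theta>] by (simp add: abs_mult mult_left_le)
  then show ?thesis using assms by simp
qed

lemma artanh_mult_sin_has_real_derivative:
  assumes r: "0 < r" "r < 1"
  shows "((\<lambda>\<theta>. artanh (r * sin \<theta>)) has_real_derivative r * cos \<theta> / (1 - r\<^sup>2 * (sin \<theta>)\<^sup>2)) (at \<theta>)"
proof -
  have "((\<lambda>\<theta>. r * sin \<theta>) has_real_derivative r * cos \<theta>) (at \<theta>)"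
    by (auto intro!: derivative_eq_intros)
  from DERIV_chain2[OF artanh_real_has_field_derivative this] abs_mult_sin_less_one[OF r]
  show ?thesis by (simp add: power_mult_distrib abs_less_iff)
qed

lemma great_circle_velocity:
  assumes r: "0 < r" "r < 1"
  obtains \<gamma>' where "\<And>\<tau>. (great_circle r has_vector_derivative \<gamma>' \<tau>) (at \<tau>)"
    and "continuous_on UNIV \<gamma>'"
    and "\<And>\<tau>. norm (\<gamma>' \<tau>) = pi / sqrt (1 - r\<^sup>2 * (sin (pi * \<tau> - pi / 2))\<^sup>2)"
proof -
  define c where "c = sqrt (1 - r\<^sup>2)"
  define D where "D = (\<lambda>\<tau>. 1 - r\<^sup>2 * (sin (pi * \<tau> - pi / 2))\<^sup>2)"
  define \<gamma>' where "\<gamma>' = (\<lambda>\<tau>. (pi * (c / D \<tau>), pi * (r * cos (pi * \<tau> - pi / 2) / D \<tau>)))"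
  have c: "c > 0" "c\<^sup>2 = 1 - r\<^sup>2"
    unfolding c_def using r by (simp_all add: power_less_one_iff less_imp_le)
  have D: "D \<tau> > 0" for \<tau> unfolding D_def using one_minus_sq_mult_sin_sq_pos[OF r] .
  have Deq: "(cos \<theta>)\<^sup>2 + c\<^sup>2 * (sin \<theta>)\<^sup>2 = 1 - r\<^sup>2 * (sin \<theta>)\<^sup>2" for \<theta>
    unfolding c by (simp add: cos_squared_eq algebra_simps)
  have dX: "(arctan_scaled_tan c has_real_derivative c / (1 - r\<^sup>2 * (sin \<theta>)\<^sup>2)) (at \<theta>)" for \<theta>
    using arctan_scaled_tan_has_real_derivative[OF c(1)] unfolding Deq .
  have "(great_circle r has_vector_derivative \<gamma>' \<tau>) (at \<tau>)" for \<tau>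
  proof -
    have a: "((\<lambda>\<tau>. pi * \<tau> - pi / 2) has_real_derivative pi) (at \<tau>)"
      by (auto intro!: derivative_eq_intros)
    have "((\<lambda>\<tau>. arctan_scaled_tan c (pi * \<tau> - pi / 2)) has_real_derivative fst (\<gamma>' \<tau>)) (at \<tau>)"
      using DERIV_chain2[OF dX a] unfolding \<gamma>'_def D_def by (simp add: mult.commute)
    moreover have "((\<lambda>\<tau>. artanh (r * sin (pi * \<tau> - pi / 2))) has_real_derivative snd (\<gamma>' \<tau>)) (at \<tau>)"
      using DERIV_chain2[OF artanh_mult_sin_has_real_derivative[OF r] a] unfolding \<gamma>'_def D_def by (simp add: mult.commute)
    ultimately have "((\<lambda>\<tau>. (arctan_scaled_tan c (pi * \<tau> - pi / 2), artanh (r * sin (pi * \<tau> - pi / 2))))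
        has_vector_derivative (fst (\<gamma>' \<tau>), snd (\<gamma>' \<tau>))) (at \<tau>)"
      by (intro has_vector_derivative_Pair) (simp_all add: has_real_derivative_iff_has_vector_derivative)
    then show ?thesis unfolding great_circle_def[abs_def] c_def by simp
  qed
  moreover have "continuous_on UNIV \<gamma>'"
    unfolding \<gamma>'_def using D unfolding D_def
    by (auto intro!: continuous_intros simp: less_imp_neq[symmetric])
  moreover have "norm (\<gamma>' \<tau>) = pi / sqrt (D \<tau>)" for \<tau>
  proof -
    have "(pi * (c / D \<tau>))\<^sup>2 + (pi * (r * cos (pi * \<tau> - pi / 2) / D \<tau>))\<^sup>2
        = pi\<^sup>2 * (c\<^sup>2 + r\<^sup>2 * (cos (pi * \<tau> - pi / 2))\<^sup>2) / (D \<tau>)\<^sup>2"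
      by (simp add: power_mult_distrib power_divide add_divide_distrib algebra_simps)
    also have "c\<^sup>2 + r\<^sup>2 * (cos (pi * \<tau> - pi / 2))\<^sup>2 = D \<tau>"
      unfolding c D_def by (simp add: cos_squared_eq algebra_simps)
    also have "pi\<^sup>2 * D \<tau> / (D \<tau>)\<^sup>2 = (pi / sqrt (D \<tau>))\<^sup>2"
      using D[of \<tau>] by (simp add: power2_eq_square)
    finally show ?thesis
      unfolding \<gamma>'_def norm_Pair real_norm_def power2_abs using D[of \<tau>] by simp
  qed
  ultimately show ?thesis using that unfolding D_def by blast
qed

lemma noncontr_loop_great_circle:
  assumes "0 < r" "r < 1"
  shows "noncontr_loop \<beta> (great_circle r)"
proof -
  obtain \<gamma>' where d: "\<And>\<tau>. (great_circle r has_vector_derivative \<gamma>' \<tau>) (at \<tau>)"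
    and c: "continuous_on UNIV \<gamma>'"
    by (rule great_circle_velocity[OF assms]) blast
  have "great_circle r 1 = deck \<beta> 1 0 (great_circle r 0)"
    unfolding great_circle_def deck_def arctan_scaled_tan_def
    using assms by (simp add: cos_pi_half artanh_minus_real)
  then show ?thesis by (rule noncontr_loopI[OF d c, rotated]) simp
qed

lemma has_integral_arccos_substitution:
  fixes f :: "real \<Rightarrow> real"
  assumes r: "0 < r" and f: "continuous_on {0..1} f"
  shows "((\<lambda>t. f (arccos (- t / r) / pi) / (pi * sqrt (r\<^sup>2 - t\<^sup>2))) has_integral integral {0..1} f) {-r..r}"
proof -
  define g where "g = (\<lambda>t. arccos (- t / r) / pi)"
  define g' where "g' = (\<lambda>t. 1 / (pi * sqrt (r\<^sup>2 - t\<^sup>2)))"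
  have sub: "g ` {-r..r} \<subseteq> {0..1}"
    unfolding g_def using r arccos_bounded by (auto simp: field_simps)
  have cont: "continuous_on {-r..r} g"
    unfolding g_def using r by (auto intro!: continuous_intros simp: field_simps)
  have deriv: "(g has_field_derivative g' t) (at t within {-r..r})" if t: "t \<in> {-r..r} - {-r, r}" for t
  proof -
    have t1: "-1 < - t / r" "- t / r < 1" using t r by (auto simp: field_simps)
    have "((\<lambda>t. - t / r) has_real_derivative - 1 / r) (at t)"
      using r by (auto intro!: derivative_eq_intros)
    from DERIV_cdivide[OF DERIV_chain2[OF DERIV_arccos[OF t1] this], of pi]
    have "(g has_real_derivative inverse (- sqrt (1 - (- t / r)\<^sup>2)) * (- 1 / r) / pi) (at t)"
      unfolding g_def .
    moreover have "sqrt (1 - (- t / r)\<^sup>2) = sqrt (r\<^sup>2 - t\<^sup>2) / r"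
    proof -
      have "1 - (- t / r)\<^sup>2 = (r\<^sup>2 - t\<^sup>2) / r\<^sup>2" using r by (simp add: field_simps power2_eq_square)
      then show ?thesis using r by (simp add: real_sqrt_divide)
    qed
    ultimately show ?thesis
      unfolding g'_def using r by (simp add: field_simps has_field_derivative_at_within)
  qed
  have ends: "g (-r) = 0" "g r = 1" unfolding g_def using r by auto
  have "((\<lambda>t. g' t *\<^sub>R f (g t)) has_integral integral {g (-r)..g r} f) {-r..r}"
    by (rule has_integral_substitution_strong[where s = "{-r, r}", OF _ _ _ sub f cont deriv])
       (use r ends in auto)
  then show ?thesis unfolding ends unfolding g_def g'_def by simp
qed

lemma has_integral_even_half:
  fixes h :: "real \<Rightarrow> real"
  assumes L: "(h has_integral L) {-r..r}" and even: "\<And>t. t \<in> {-r..r} \<Longrightarrow> h (- t) = h t"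
    and r: "0 \<le> r"
  shows "(h has_integral L / 2) {0..r}"
proof -
  have "h integrable_on {0..r}"
    using integrable_subinterval_real[OF has_integral_integrable[OF L]] r by auto
  then have I: "(h has_integral integral {0..r} h) {0..r}" by (rule integrable_integral)
  then have "((\<lambda>x. h (- x)) has_integral integral {0..r} h) {-r..-0}"
    by (subst has_integral_reflect_real)
  then have "((\<lambda>x. h (- x)) has_integral integral {0..r} h) {-r..0}" by simp
  then have "(h has_integral integral {0..r} h) {-r..0}"
    by (rule has_integral_eq[rotated]) (use even in auto)
  from has_integral_combine[OF _ _ this I] r
  have "(h has_integral integral {0..r} h + integral {0..r} h) {-r..r}" by simp
  with has_integral_unique[OF L] have "L = 2 * integral {0..r} h" by simp
  then show ?thesis using I by simp
qed

(* phi / phi0 in the coordinate t = tanh y, in which phi0 y = sqrt (1 - t^2). *)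
definition phi_ratio :: "(real \<Rightarrow> real) \<Rightarrow> real \<Rightarrow> real" where
  "phi_ratio \<phi> t = \<phi> (artanh t) / sqrt (1 - t\<^sup>2)"

context systolic_conformal_metric
begin

lemma great_circle_integral_ge:
  assumes r: "0 < r" "r < 1"
  shows "\<exists>L. ((\<lambda>t. phi_ratio \<phi> t / sqrt (r\<^sup>2 - t\<^sup>2)) has_integral L) {-r..r} \<and> pi \<le> L"
proof -
  define f where
    "f = (\<lambda>\<tau>. \<phi> (artanh (r * sin (pi * \<tau> - pi / 2))) * (pi / sqrt (1 - r\<^sup>2 * (sin (pi * \<tau> - pi / 2))\<^sup>2)))"
  have f: "continuous_on UNIV f"
    unfolding f_def using one_minus_sq_mult_sin_sq_pos[OF r] abs_mult_sin_less_one[OF r]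
    by (auto intro!: continuous_intros continuous_on_compose2[OF continuous]
        simp: less_imp_neq[symmetric] abs_less_iff)
  obtain \<gamma>' where d: "\<And>\<tau>. (great_circle r has_vector_derivative \<gamma>' \<tau>) (at \<tau>)"
    and n: "\<And>\<tau>. norm (\<gamma>' \<tau>) = pi / sqrt (1 - r\<^sup>2 * (sin (pi * \<tau> - pi / 2))\<^sup>2)"
    by (rule great_circle_velocity[OF r]) blast
  have "(f has_integral integral {0..1} f) {0..1}"
    using integrable_continuous_real[OF continuous_on_subset[OF f]] by blast
  then have "conf_length \<phi> (great_circle r) (integral {0..1} f)"
    by (intro conf_lengthI[OF d]) (simp add: n f_def great_circle_def)
  with noncontr_loop_great_circle[OF r] have "pi \<le> integral {0..1} f"
    by (rule loop_length_ge)
  have "((\<lambda>t. f (arccos (- t / r) / pi) / (pi * sqrt (r\<^sup>2 - t\<^sup>2))) has_integral integral {0..1} f) {-r..r}"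
    using has_integral_arccos_substitution[OF r(1) continuous_on_subset[OF f]] by simp
  moreover have "f (arccos (- t / r) / pi) / (pi * sqrt (r\<^sup>2 - t\<^sup>2)) = phi_ratio \<phi> t / sqrt (r\<^sup>2 - t\<^sup>2)"
    if "t \<in> {-r..r}" for t
  proof -
    have "-1 \<le> - t / r" "- t / r \<le> 1" using that r by (auto simp: field_simps)
    then have "r * sin (pi * (arccos (- t / r) / pi) - pi / 2) = t"
      using r by (simp add: sin_diff)
    then show ?thesis
      unfolding f_def phi_ratio_def by (simp add: power_mult_distrib[symmetric] field_simps)
  qed
  ultimately have "((\<lambda>t. phi_ratio \<phi> t / sqrt (r\<^sup>2 - t\<^sup>2)) has_integral integral {0..1} f) {-r..r}"
    by (rule has_integral_eq[rotated])
  with \<open>pi \<le> integral {0..1} f\<close> show ?thesis by blast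
qed

lemma half_great_circle_integral_ge:
  assumes r: "0 < r" "r < 1"
  shows "\<exists>L. ((\<lambda>t. phi_ratio \<phi> t / sqrt (r\<^sup>2 - t\<^sup>2)) has_integral L) {0..r} \<and> pi / 2 \<le> L"
proof -
  obtain L where L: "((\<lambda>t. phi_ratio \<phi> t / sqrt (r\<^sup>2 - t\<^sup>2)) has_integral L) {-r..r}" "pi \<le> L"
    using great_circle_integral_ge[OF r] by blast
  have "((\<lambda>t. phi_ratio \<phi> t / sqrt (r\<^sup>2 - t\<^sup>2)) has_integral L / 2) {0..r}"
    by (rule has_integral_even_half[OF L(1)]) (use r even in \<open>auto simp: phi_ratio_def\<close>)
  then show ?thesis using L(2) by (intro exI[of _ "L / 2"]) auto
qed

end

section \<open>An Abel transform inequality\<close>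

lemma nn_integral_indicator_has_integral:
  fixes f :: "real \<Rightarrow> real"
  assumes "\<And>x. x \<in> S \<Longrightarrow> 0 \<le> f x" "(f has_integral I) S"
  shows "(\<integral>\<^sup>+ x. ennreal (indicator S x * f x) \<partial>lborel) = ennreal I"
proof -
  have "(\<integral>\<^sup>+ x. ennreal (indicator S x * f x) \<partial>lborel) = (\<integral>\<^sup>+ x. ennreal (f x) * indicator S x \<partial>lborel)"
    by (rule nn_integral_cong) (auto simp: indicator_def)
  also have "\<dots> = ennreal I" by (rule nn_integral_has_integral_lebesgue'[OF assms])
  finally show ?thesis .
qed

definition abel_integrand ::
    "real \<Rightarrow> (real \<Rightarrow> real) \<Rightarrow> (real \<Rightarrow> real) \<Rightarrow> real \<Rightarrow> real \<Rightarrow> ennreal" where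
  "abel_integrand T w G r t =
     ennreal (indicator {0..T} r * w r) * ennreal (indicator {0..T} t * G t) *
     ennreal (if 0 \<le> t \<and> t \<le> r then 1 / sqrt (r\<^sup>2 - t\<^sup>2) else 0)"

lemma abel_integrand_eq_inner_t:
  assumes "\<And>t. t \<in> {0..T} \<Longrightarrow> 0 \<le> G t"
  shows "abel_integrand T w G r t =
    ennreal (indicator {0..T} r * w r) * ennreal (indicator {0..r} t * (G t / sqrt (r\<^sup>2 - t\<^sup>2)))"
proof (cases "r \<in> {0..T}")
  case True
  then have "indicator {0..T} t * G t * (if 0 \<le> t \<and> t \<le> r then 1 / sqrt (r\<^sup>2 - t\<^sup>2) else 0)
      = indicator {0..r} t * (G t / sqrt (r\<^sup>2 - t\<^sup>2))"
    by (auto simp: indicator_def)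
  moreover have "0 \<le> indicator {0..T} t * G t" using assms by (simp add: indicator_def)
  ultimately show ?thesis
    unfolding abel_integrand_def by (simp add: ennreal_mult[symmetric] mult.assoc)
qed (simp add: abel_integrand_def)

lemma abel_integrand_eq_inner_r:
  assumes "\<And>r. r \<in> {0..T} \<Longrightarrow> 0 \<le> w r"
  shows "abel_integrand T w G r t =
    ennreal (indicator {0..T} t * G t) * ennreal (indicator {t..T} r * (w r / sqrt (r\<^sup>2 - t\<^sup>2)))"
proof (cases "t \<in> {0..T}")
  case True
  then have "indicator {0..T} r * w r * (if 0 \<le> t \<and> t \<le> r then 1 / sqrt (r\<^sup>2 - t\<^sup>2) else 0)
      = indicator {t..T} r * (w r / sqrt (r\<^sup>2 - t\<^sup>2))"
    by (auto simp: indicator_def)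
  moreover have "0 \<le> indicator {0..T} r * w r" using assms by (simp add: indicator_def)
  ultimately show ?thesis
    unfolding abel_integrand_def by (simp add: ennreal_mult[symmetric] ac_simps)
qed (simp add: abel_integrand_def)

lemma abel_integrand_lower_bound:
  fixes G w :: "real \<Rightarrow> real"
  assumes P: "0 \<le> P" and measurable: "G \<in> borel_measurable borel" "w \<in> borel_measurable borel"
    and G_nonneg: "\<And>t. t \<in> {0..T} \<Longrightarrow> 0 \<le> G t" and w_nonneg: "\<And>r. r \<in> {0..T} \<Longrightarrow> 0 \<le> w r"
    and abel_ge: "\<And>r. r \<in> {0<..T} \<Longrightarrow>
      \<exists>L. ((\<lambda>t. G t / sqrt (r\<^sup>2 - t\<^sup>2)) has_integral L) {0..r} \<and> P \<le> L"
    and W: "(w has_integral W) {0..T}"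
  shows "ennreal (P * W) \<le> (\<integral>\<^sup>+ r. \<integral>\<^sup>+ t. abel_integrand T w G r t \<partial>lborel \<partial>lborel)"
proof -
  define a where "a = (\<lambda>r. indicator {0..T} r * w r)"
  have "(\<integral>\<^sup>+ r. ennreal (a r) * ennreal P \<partial>lborel) = (\<integral>\<^sup>+ r. ennreal (a r) \<partial>lborel) * ennreal P"
    by (rule nn_integral_multc) (unfold a_def, use measurable in measurable)
  also have "(\<integral>\<^sup>+ r. ennreal (a r) \<partial>lborel) = ennreal W"
    unfolding a_def by (rule nn_integral_indicator_has_integral[OF _ W]) (use w_nonneg in auto)
  finally have "ennreal (P * W) = (\<integral>\<^sup>+ r. ennreal (a r) * ennreal P \<partial>lborel)"
    using P has_integral_nonneg[OF W] w_nonneg by (simp add: ennreal_mult mult.commute)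
  also have "\<dots> \<le> (\<integral>\<^sup>+ r. \<integral>\<^sup>+ t. abel_integrand T w G r t \<partial>lborel \<partial>lborel)"
  proof (rule nn_integral_mono_AE)
    show "AE r in lborel. ennreal (a r) * ennreal P \<le> (\<integral>\<^sup>+ t. abel_integrand T w G r t \<partial>lborel)"
      using AE_lborel_singleton[of 0]
    proof (rule eventually_mono)
      fix r :: real assume "r \<noteq> 0"
      have "(\<integral>\<^sup>+ t. abel_integrand T w G r t \<partial>lborel) =
          (\<integral>\<^sup>+ t. ennreal (a r) * ennreal (indicator {0..r} t * (G t / sqrt (r\<^sup>2 - t\<^sup>2))) \<partial>lborel)"
        unfolding a_def by (intro nn_integral_cong abel_integrand_eq_inner_t G_nonneg)
      also have "\<dots> = ennreal (a r) *
          (\<integral>\<^sup>+ t. ennreal (indicator {0..r} t * (G t / sqrt (r\<^sup>2 - t\<^sup>2))) \<partial>lborel)"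
        by (rule nn_integral_cmult) (use measurable in measurable)
      finally have inner: "(\<integral>\<^sup>+ t. abel_integrand T w G r t \<partial>lborel) =
          ennreal (a r) * (\<integral>\<^sup>+ t. ennreal (indicator {0..r} t * (G t / sqrt (r\<^sup>2 - t\<^sup>2))) \<partial>lborel)" .
      show "ennreal (a r) * ennreal P \<le> (\<integral>\<^sup>+ t. abel_integrand T w G r t \<partial>lborel)"
      proof (cases "r \<in> {0..T}")
        case True
        with \<open>r \<noteq> 0\<close> have "r \<in> {0<..T}" by auto
        then obtain L where L: "((\<lambda>t. G t / sqrt (r\<^sup>2 - t\<^sup>2)) has_integral L) {0..r}" "P \<le> L"
          using abel_ge by blast
        have "(\<integral>\<^sup>+ t. ennreal (indicator {0..r} t * (G t / sqrt (r\<^sup>2 - t\<^sup>2))) \<partial>lborel) = ennreal L"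
          by (rule nn_integral_indicator_has_integral[OF _ L(1)]) (use True G_nonneg in auto)
        then show ?thesis unfolding inner using L(2) by (auto intro!: mult_left_mono ennreal_leI)
      qed (simp add: a_def inner)
    qed
  qed
  finally show ?thesis .
qed

lemma abel_integrand_upper_bound:
  fixes G w K :: "real \<Rightarrow> real"
  assumes measurable: "w \<in> borel_measurable borel"
    and G_nonneg: "\<And>t. t \<in> {0..T} \<Longrightarrow> 0 \<le> G t" and w_nonneg: "\<And>r. r \<in> {0..T} \<Longrightarrow> 0 \<le> w r"
    and K: "\<And>t. t \<in> {0..<T} \<Longrightarrow> ((\<lambda>r. w r / sqrt (r\<^sup>2 - t\<^sup>2)) has_integral K t) {t..T}"
    and K_nonneg: "\<And>t. t \<in> {0..T} \<Longrightarrow> 0 \<le> K t"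
    and J: "((\<lambda>t. G t * K t) has_integral J) {0..T}"
  shows "(\<integral>\<^sup>+ t. \<integral>\<^sup>+ r. abel_integrand T w G r t \<partial>lborel \<partial>lborel) \<le> ennreal J"
proof -
  have "(\<integral>\<^sup>+ t. \<integral>\<^sup>+ r. abel_integrand T w G r t \<partial>lborel \<partial>lborel)
      \<le> (\<integral>\<^sup>+ t. ennreal (indicator {0..T} t * (G t * K t)) \<partial>lborel)"
  proof (rule nn_integral_mono)
    fix t :: real
    have "(\<integral>\<^sup>+ r. abel_integrand T w G r t \<partial>lborel) = (\<integral>\<^sup>+ r. ennreal (indicator {0..T} t * G t) *
        ennreal (indicator {t..T} r * (w r / sqrt (r\<^sup>2 - t\<^sup>2))) \<partial>lborel)"
      by (intro nn_integral_cong abel_integrand_eq_inner_r w_nonneg)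
    also have "\<dots> = ennreal (indicator {0..T} t * G t) *
        (\<integral>\<^sup>+ r. ennreal (indicator {t..T} r * (w r / sqrt (r\<^sup>2 - t\<^sup>2))) \<partial>lborel)"
      by (rule nn_integral_cmult) (use measurable in measurable)
    finally have inner: "(\<integral>\<^sup>+ r. abel_integrand T w G r t \<partial>lborel) = ennreal (indicator {0..T} t * G t) *
        (\<integral>\<^sup>+ r. ennreal (indicator {t..T} r * (w r / sqrt (r\<^sup>2 - t\<^sup>2))) \<partial>lborel)" .
    show "(\<integral>\<^sup>+ r. abel_integrand T w G r t \<partial>lborel) \<le> ennreal (indicator {0..T} t * (G t * K t))"
    proof (cases "t \<in> {0..T}")
      case True
      have "(\<integral>\<^sup>+ r. ennreal (indicator {t..T} r * (w r / sqrt (r\<^sup>2 - t\<^sup>2))) \<partial>lborel) \<le> ennreal (K t)"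
      proof (cases "t = T")
        case False
        with True have "t \<in> {0..<T}" by auto
        then show ?thesis
          using nn_integral_indicator_has_integral[OF _ K] w_nonneg by simp
      next
        case True
        then have "(\<lambda>r. ennreal (indicator {t..T} r * (w r / sqrt (r\<^sup>2 - t\<^sup>2)))) = (\<lambda>r. 0)"
          by (simp add: indicator_def fun_eq_iff)
        then show ?thesis by (simp only:) simp
      qed
      then have "(\<integral>\<^sup>+ r. abel_integrand T w G r t \<partial>lborel) \<le> ennreal (G t) * ennreal (K t)"
        unfolding inner using True by (simp add: mult_left_mono)
      then show ?thesis
        using True G_nonneg[OF True] K_nonneg[OF True] by (simp add: ennreal_mult)
    qed (simp add: inner)
  qed
  also have "\<dots> = ennreal J"
    by (rule nn_integral_indicator_has_integral[OF _ J]) (use G_nonneg K_nonneg in auto)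
  finally show ?thesis .
qed

lemma abel_transform_inequality:
  fixes G w K :: "real \<Rightarrow> real"
  assumes P: "0 \<le> P"
    and measurable: "G \<in> borel_measurable borel" "w \<in> borel_measurable borel"
    and G_nonneg: "\<And>t. t \<in> {0..T} \<Longrightarrow> 0 \<le> G t" and w_nonneg: "\<And>r. r \<in> {0..T} \<Longrightarrow> 0 \<le> w r"
    and abel_ge: "\<And>r. r \<in> {0<..T} \<Longrightarrow>
      \<exists>L. ((\<lambda>t. G t / sqrt (r\<^sup>2 - t\<^sup>2)) has_integral L) {0..r} \<and> P \<le> L"
    and W: "(w has_integral W) {0..T}"
    and K: "\<And>t. t \<in> {0..<T} \<Longrightarrow> ((\<lambda>r. w r / sqrt (r\<^sup>2 - t\<^sup>2)) has_integral K t) {t..T}"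
    and K_nonneg: "\<And>t. t \<in> {0..T} \<Longrightarrow> 0 \<le> K t"
    and J: "((\<lambda>t. G t * K t) has_integral J) {0..T}"
  shows "P * W \<le> J"
proof -
  have "case_prod (abel_integrand T w G) \<in> borel_measurable (lborel \<Otimes>\<^sub>M lborel)"
    unfolding abel_integrand_def case_prod_unfold using measurable by measurable
  then have "(\<integral>\<^sup>+ r. \<integral>\<^sup>+ t. abel_integrand T w G r t \<partial>lborel \<partial>lborel)
      = (\<integral>\<^sup>+ t. \<integral>\<^sup>+ r. abel_integrand T w G r t \<partial>lborel \<partial>lborel)"
    by (rule lborel_pair.Fubini'[symmetric])
  then have "ennreal (P * W) \<le> ennreal J"
    using abel_integrand_lower_bound[OF P measurable G_nonneg w_nonneg abel_ge W]
      abel_integrand_upper_bound[OF measurable(2) G_nonneg w_nonneg K K_nonneg J] by simp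
  moreover have "0 \<le> J"
    by (rule has_integral_nonneg[OF J]) (use G_nonneg K_nonneg in auto)
  ultimately show ?thesis by (simp add: ennreal_le_iff)
qed

lemma has_integral_arcsin_comp:
  fixes h h' k :: "real \<Rightarrow> real"
  assumes "a \<le> b" and h: "continuous_on {a..b} h"
    and deriv: "\<And>x. x \<in> {a<..<b} \<Longrightarrow> (h has_real_derivative h' x) (at x)"
    and k: "\<And>x. x \<in> {a..b} \<Longrightarrow> 1 - (h x)\<^sup>2 = (k x)\<^sup>2" "\<And>x. x \<in> {a..b} \<Longrightarrow> 0 \<le> k x"
    and k_pos: "\<And>x. x \<in> {a<..<b} \<Longrightarrow> 0 < k x"
  shows "((\<lambda>x. h' x / k x) has_integral arcsin (h b) - arcsin (h a)) {a..b}"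
proof (rule fundamental_theorem_of_calculus_interior[OF \<open>a \<le> b\<close>])
  have "(h x)\<^sup>2 \<le> 1" if "x \<in> {a..b}" for x
    using k(1)[OF that] zero_le_power2[of "k x"] by linarith
  then show "continuous_on {a..b} (\<lambda>x. arcsin (h x))"
    by (intro continuous_on_arcsin[OF h]) (auto simp: abs_square_le_1 abs_le_iff)
  fix x assume x: "x \<in> {a<..<b}"
  then have "sqrt (1 - (h x)\<^sup>2) = k x" using k(1,2)[of x] by simp
  moreover have "1 - (h x)\<^sup>2 = (k x)\<^sup>2" using k(1)[of x] x by simp
  then have "(h x)\<^sup>2 < 1" using k_pos[OF x] by (smt (verit) zero_less_power2)
  then have "-1 < h x" "h x < 1" by (auto simp: abs_square_less_1 abs_less_iff)
  note DERIV_chain2[OF DERIV_arcsin[OF this] deriv[OF x]]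
  ultimately show "((\<lambda>x. arcsin (h x)) has_vector_derivative h' x / k x) (at x)"
    by (simp add: has_real_derivative_iff_has_vector_derivative divide_inverse mult.commute)
qed

lemma has_integral_abel_kernel:
  fixes t T :: real
  assumes tT: "0 \<le> t" "t < T"
  shows "((\<lambda>r. (r / sqrt (T\<^sup>2 - r\<^sup>2)) / sqrt (r\<^sup>2 - t\<^sup>2)) has_integral pi / 2) {t..T}"
proof -
  define d where "d = T\<^sup>2 - t\<^sup>2"
  have d: "d > 0" unfolding d_def using tT by (simp add: power_strict_mono)
  define h k where "h = (\<lambda>r::real. (2 * r\<^sup>2 - T\<^sup>2 - t\<^sup>2) / d)"
    and "k = (\<lambda>r::real. 2 * sqrt (T\<^sup>2 - r\<^sup>2) * sqrt (r\<^sup>2 - t\<^sup>2) / d)"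
  have "((\<lambda>r. 4 * r / d / k r) has_integral arcsin (h T) - arcsin (h t)) {t..T}"
  proof (rule has_integral_arcsin_comp)
    show "continuous_on {t..T} h" unfolding h_def using d by (intro continuous_intros) auto
    show "(h has_real_derivative 4 * r / d) (at r)" for r
      unfolding h_def using d by (auto intro!: derivative_eq_intros)
    fix r assume r: "r \<in> {t..T}"
    then have "0 \<le> T\<^sup>2 - r\<^sup>2" "0 \<le> r\<^sup>2 - t\<^sup>2" using tT by (auto intro!: power_mono)
    moreover have "d\<^sup>2 - (2 * r\<^sup>2 - T\<^sup>2 - t\<^sup>2)\<^sup>2 = 4 * (T\<^sup>2 - r\<^sup>2) * (r\<^sup>2 - t\<^sup>2)"
      unfolding d_def by algebra
    ultimately show "1 - (h r)\<^sup>2 = (k r)\<^sup>2" "0 \<le> k r"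
      unfolding h_def k_def using d by (simp_all add: power_mult_distrib power_divide field_simps)
  next
    fix r assume "r \<in> {t<..<T}"
    then have "0 < T\<^sup>2 - r\<^sup>2" "0 < r\<^sup>2 - t\<^sup>2" using tT by (auto intro!: power_strict_mono)
    then show "0 < k r" unfolding k_def using d by simp
  qed (use tT in simp)
  moreover have "h T = 1" "h t = -1" unfolding h_def d_def using d d_def by (simp_all add: field_simps)
  ultimately have "((\<lambda>r. 4 * r / d / k r) has_integral pi) {t..T}" by simp
  from has_integral_mult_right[OF this, of "1 / 2"]
  show ?thesis unfolding k_def using d by (simp add: field_simps)
qed

lemma weighted_abel_arcsin_arg_identity:
  fixes p q z :: real
  assumes "0 < z" "p < q"
  shows "1 - (((p + q) - 2 * p * q / z) / (q - p))\<^sup>2 = 4 * (p * q) * (q - z) * (z - p) / (z * (q - p))\<^sup>2"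
proof -
  have "(z * (q - p))\<^sup>2 - ((p + q) * z - 2 * p * q)\<^sup>2 = 4 * (p * q) * (q - z) * (z - p)"
    by algebra
  moreover have "((p + q) - 2 * p * q / z) / (q - p) = ((p + q) * z - 2 * p * q) / (z * (q - p))"
    using assms by (simp add: field_simps)
  ultimately show ?thesis using assms by (simp add: power_divide field_simps)
qed

lemma has_integral_abel_kernel_weighted:
  fixes t T :: real
  assumes tT: "0 \<le> t" "t < T" "T < 1"
  shows "((\<lambda>r. (r / ((1 - r\<^sup>2) * sqrt (T\<^sup>2 - r\<^sup>2))) / sqrt (r\<^sup>2 - t\<^sup>2)) has_integral
           pi / (2 * (sqrt (1 - T\<^sup>2) * sqrt (1 - t\<^sup>2)))) {t..T}"
proof -
  define p q where "p = 1 - T\<^sup>2" and "q = 1 - t\<^sup>2"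
  have p: "0 < p" "p < q"
    unfolding p_def q_def using tT by (simp_all add: power_less_one_iff power_strict_mono)
  define m where "m = sqrt p * sqrt q"
  have m: "0 < m" "m\<^sup>2 = p * q" unfolding m_def using p by (auto simp: power_mult_distrib)
  have z: "p \<le> 1 - r\<^sup>2" "1 - r\<^sup>2 \<le> q" if "r \<in> {t..T}" for r
    unfolding p_def q_def using that tT by (auto intro!: power_mono)
  define h h' k where "h = (\<lambda>r::real. ((p + q) - 2 * p * q / (1 - r\<^sup>2)) / (q - p))"
    and "h' = (\<lambda>r::real. - (4 * m\<^sup>2 * r) / ((1 - r\<^sup>2)\<^sup>2 * (q - p)))"
    and "k = (\<lambda>r. 2 * m * sqrt (r\<^sup>2 - t\<^sup>2) * sqrt (T\<^sup>2 - r\<^sup>2) / ((1 - r\<^sup>2) * (q - p)))"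
  have "((\<lambda>r. h' r / k r) has_integral arcsin (h T) - arcsin (h t)) {t..T}"
  proof (rule has_integral_arcsin_comp)
    show "continuous_on {t..T} h"
      unfolding h_def using z p by (intro continuous_intros) force+
    fix r assume r: "r \<in> {t..T}"
    have e: "r\<^sup>2 - t\<^sup>2 = q - (1 - r\<^sup>2)" "T\<^sup>2 - r\<^sup>2 = (1 - r\<^sup>2) - p" unfolding p_def q_def by auto
    have "0 < 1 - r\<^sup>2" using z[OF r] p by auto
    then show "1 - (h r)\<^sup>2 = (k r)\<^sup>2" "0 \<le> k r"
      unfolding h_def k_def e weighted_abel_arcsin_arg_identity[OF \<open>0 < 1 - r\<^sup>2\<close> p(2)]
      using z[OF r] p m by (simp_all add: power_mult_distrib power_divide)
  next
    fix r assume r: "r \<in> {t<..<T}"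
    then have "0 < T\<^sup>2 - r\<^sup>2" "0 < r\<^sup>2 - t\<^sup>2" using tT by (auto intro!: power_strict_mono)
    moreover have "0 < 1 - r\<^sup>2" using z[of r] r p by auto
    ultimately show "0 < k r" unfolding k_def using p m by simp
    have "((\<lambda>r. 1 - r\<^sup>2) has_real_derivative - (2 * r)) (at r)"
      by (auto intro!: derivative_eq_intros)
    from DERIV_cdivide[OF DERIV_diff[OF DERIV_const[of "p + q"]
          DERIV_divide[OF DERIV_const[of "2 * p * q"] this]], of "q - p"] \<open>0 < 1 - r\<^sup>2\<close>
    show "(h has_real_derivative h' r) (at r)"
      unfolding h_def h'_def m(2) by (simp add: power2_eq_square mult.assoc)
  qed (use tT in simp)
  moreover have "h T = -1" "h t = 1"
    unfolding h_def using p by (simp_all add: p_def[symmetric] q_def[symmetric] field_simps)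
  ultimately have "((\<lambda>r. h' r / k r) has_integral - pi) {t..T}" by simp
  from has_integral_mult_right[OF this, of "- 1 / (2 * m)"]
  have "((\<lambda>r. - 1 / (2 * m) * (h' r / k r)) has_integral pi / (2 * m)) {t..T}" by simp
  moreover have "- 1 / (2 * m) * (h' r / k r) = r / ((1 - r\<^sup>2) * sqrt (T\<^sup>2 - r\<^sup>2)) / sqrt (r\<^sup>2 - t\<^sup>2)"
    if "r \<in> {t..T}" for r
  proof -
    define z A B where "z = 1 - r\<^sup>2" and "A = sqrt (r\<^sup>2 - t\<^sup>2)" and "B = sqrt (T\<^sup>2 - r\<^sup>2)"
    have "0 < z" using z[OF that] p unfolding z_def by auto
    then show ?thesis
      unfolding h'_def k_def z_def[symmetric] A_def[symmetric] B_def[symmetric] using p m(1)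
      by (cases "A = 0 \<or> B = 0") (auto simp: field_simps power2_eq_square)
  qed
  ultimately have "((\<lambda>r. (r / ((1 - r\<^sup>2) * sqrt (T\<^sup>2 - r\<^sup>2))) / sqrt (r\<^sup>2 - t\<^sup>2)) has_integral pi / (2 * m)) {t..T}"
    by (rule has_integral_eq[rotated])
  then show ?thesis unfolding m_def p_def q_def .
qed

lemma has_integral_div_sqrt_diff_sq:
  fixes T :: real assumes T: "0 < T"
  shows "((\<lambda>r. r / sqrt (T\<^sup>2 - r\<^sup>2)) has_integral T) {0..T}"
proof -
  define F where "F = (\<lambda>r::real. - sqrt (T\<^sup>2 - r\<^sup>2))"
  have cont: "continuous_on {0..T} F" unfolding F_def by (auto intro!: continuous_intros)
  have der: "(F has_vector_derivative r / sqrt (T\<^sup>2 - r\<^sup>2)) (at r)" if r: "r \<in> {0<..<T}" for r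
  proof -
    have pos: "0 < T\<^sup>2 - r\<^sup>2" using r by (auto intro!: power_strict_mono)
    have "((\<lambda>r. T\<^sup>2 - r\<^sup>2) has_real_derivative - (2 * r)) (at r)" by (auto intro!: derivative_eq_intros)
    from DERIV_minus[OF DERIV_chain2[OF DERIV_real_sqrt[OF pos] this]]
    show ?thesis unfolding F_def by (simp add: has_real_derivative_iff_has_vector_derivative inverse_eq_divide)
  qed
  have "((\<lambda>r. r / sqrt (T\<^sup>2 - r\<^sup>2)) has_integral F T - F 0) {0..T}"
    by (rule fundamental_theorem_of_calculus_interior[OF _ cont der]) (use T in auto)
  then show ?thesis unfolding F_def using T by simp
qed

lemma has_integral_mult_sqrt_diff_sq_div:
  fixes T :: real assumes T: "0 < T" "T < 1"
  shows "((\<lambda>r. r * sqrt (T\<^sup>2 - r\<^sup>2) / (1 - r\<^sup>2)) has_integral T - sqrt (1 - T\<^sup>2) * arctan (T / sqrt (1 - T\<^sup>2))) {0..T}"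
proof -
  define c where "c = sqrt (1 - T\<^sup>2)"
  have T2: "T\<^sup>2 < 1" using T by (simp add: power_less_one_iff)
  have c: "0 < c" "c\<^sup>2 = 1 - T\<^sup>2" unfolding c_def using T2 by auto
  define F where "F = (\<lambda>r::real. - sqrt (T\<^sup>2 - r\<^sup>2) + c * arctan (sqrt (T\<^sup>2 - r\<^sup>2) / c))"
  have cont: "continuous_on {0..T} F" unfolding F_def using c by (auto intro!: continuous_intros)
  have der: "(F has_vector_derivative r * sqrt (T\<^sup>2 - r\<^sup>2) / (1 - r\<^sup>2)) (at r)" if r: "r \<in> {0<..<T}" for r
  proof -
    have pos: "0 < T\<^sup>2 - r\<^sup>2" using r by (auto intro!: power_strict_mono)
    have om: "0 < sqrt (T\<^sup>2 - r\<^sup>2)" "(sqrt (T\<^sup>2 - r\<^sup>2))\<^sup>2 = T\<^sup>2 - r\<^sup>2" using pos by auto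
    have "((\<lambda>r. T\<^sup>2 - r\<^sup>2) has_real_derivative - (2 * r)) (at r)" by (auto intro!: derivative_eq_intros)
    from DERIV_chain2[OF DERIV_real_sqrt[OF pos] this]
    have dw': "((\<lambda>r. sqrt (T\<^sup>2 - r\<^sup>2)) has_real_derivative - r / sqrt (T\<^sup>2 - r\<^sup>2)) (at r)"
      by (simp add: inverse_eq_divide)
    have "(F has_real_derivative - (- r / sqrt (T\<^sup>2 - r\<^sup>2)) + c * (inverse (1 + (sqrt (T\<^sup>2 - r\<^sup>2) / c)\<^sup>2) * ((- r / sqrt (T\<^sup>2 - r\<^sup>2)) / c))) (at r)"
      unfolding F_def
      by (rule DERIV_add[OF DERIV_minus[OF dw'] DERIV_cmult[OF DERIV_chain2[OF DERIV_arctan DERIV_cdivide[OF dw']]]])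
    moreover have "- (- r / sqrt (T\<^sup>2 - r\<^sup>2)) + c * (inverse (1 + (sqrt (T\<^sup>2 - r\<^sup>2) / c)\<^sup>2) * ((- r / sqrt (T\<^sup>2 - r\<^sup>2)) / c)) = r * sqrt (T\<^sup>2 - r\<^sup>2) / (1 - r\<^sup>2)"
    proof -
      have g: "- (- r / x) + c * (inverse (1 + (x / c)\<^sup>2) * ((- r / x) / c)) = r * x / (c\<^sup>2 + x\<^sup>2)"
        if x: "x > 0" for x
      proof -
        have "c * c + x * x > 0" using c(1) x by (simp add: add_pos_pos)
        moreover have "c * (c * x) + x * (x * x) > 0" using c(1) x by (simp add: add_pos_pos)
        ultimately show ?thesis using x c(1) by (simp add: field_simps power2_eq_square)
      qed
      have eq: "c\<^sup>2 + (sqrt (T\<^sup>2 - r\<^sup>2))\<^sup>2 = 1 - r\<^sup>2" unfolding c(2) om(2) by simp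
      show ?thesis unfolding g[OF om(1)] eq ..
    qed
    ultimately show ?thesis by (simp add: has_real_derivative_iff_has_vector_derivative)
  qed
  have "((\<lambda>r. r * sqrt (T\<^sup>2 - r\<^sup>2) / (1 - r\<^sup>2)) has_integral F T - F 0) {0..T}"
    by (rule fundamental_theorem_of_calculus_interior[OF _ cont der]) (use T in auto)
  then show ?thesis unfolding F_def c_def using T by simp
qed

lemma has_integral_abel_kernel_sqrt_weight:
  fixes t T :: real
  assumes tT: "0 \<le> t" "t < T" "T < 1"
  shows "((\<lambda>r. (r * sqrt (T\<^sup>2 - r\<^sup>2) / (1 - r\<^sup>2)) / sqrt (r\<^sup>2 - t\<^sup>2)) has_integral
            pi / 2 * (1 - sqrt (1 - T\<^sup>2) / sqrt (1 - t\<^sup>2))) {t..T}"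
proof -
  define c where "c = sqrt (1 - T\<^sup>2)"
  have T2: "T\<^sup>2 < 1" using tT by (simp add: power_less_one_iff)
  have c: "0 < c" "c\<^sup>2 = 1 - T\<^sup>2" unfolding c_def using T2 by auto
  have I: "((\<lambda>r. (r / sqrt (T\<^sup>2 - r\<^sup>2)) / sqrt (r\<^sup>2 - t\<^sup>2) - c\<^sup>2 * ((r / ((1 - r\<^sup>2) * sqrt (T\<^sup>2 - r\<^sup>2))) / sqrt (r\<^sup>2 - t\<^sup>2)))
      has_integral pi / 2 - c\<^sup>2 * (pi / (2 * (c * sqrt (1 - t\<^sup>2))))) {t..T}"
    using has_integral_diff[OF has_integral_abel_kernel[OF tT(1,2)] has_integral_mult_right[OF has_integral_abel_kernel_weighted[OF tT]]] unfolding c_def .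
  have V: "pi / 2 - c\<^sup>2 * (pi / (2 * (c * sqrt (1 - t\<^sup>2)))) = pi / 2 * (1 - c / sqrt (1 - t\<^sup>2))"
  proof -
    have "c\<^sup>2 * (pi / (2 * (c * sqrt (1 - t\<^sup>2)))) = pi / 2 * (c / sqrt (1 - t\<^sup>2))"
      using c(1) by (simp add: power2_eq_square)
    then show ?thesis by (simp add: right_diff_distrib)
  qed
  have "(r / sqrt (T\<^sup>2 - r\<^sup>2)) / sqrt (r\<^sup>2 - t\<^sup>2) - c\<^sup>2 * ((r / ((1 - r\<^sup>2) * sqrt (T\<^sup>2 - r\<^sup>2))) / sqrt (r\<^sup>2 - t\<^sup>2))
      = (r * sqrt (T\<^sup>2 - r\<^sup>2) / (1 - r\<^sup>2)) / sqrt (r\<^sup>2 - t\<^sup>2)" if r: "r \<in> {t..T}" for r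
  proof (cases "r = T")
    case True then show ?thesis by simp
  next
    case False
    define a where "a = sqrt (T\<^sup>2 - r\<^sup>2)"
    have a: "0 < a" "a\<^sup>2 = T\<^sup>2 - r\<^sup>2" unfolding a_def using r tT False by (auto intro!: power_strict_mono)
    have "r\<^sup>2 \<le> T\<^sup>2" using r tT by (auto intro!: power_mono)
    then have z: "0 < 1 - r\<^sup>2" using T2 by simp
    have cz: "c\<^sup>2 = (1 - r\<^sup>2) - a\<^sup>2" using c a by simp
    have g0: "r / a - ((1 - r\<^sup>2) - a\<^sup>2) * (r / ((1 - r\<^sup>2) * a)) = r * a / (1 - r\<^sup>2)"
      using a(1) z by (simp add: field_simps power2_eq_square)
    have g: "\<And>b. (r / a) / b - ((1 - r\<^sup>2) - a\<^sup>2) * ((r / ((1 - r\<^sup>2) * a)) / b) = (r * a / (1 - r\<^sup>2)) / b"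
      using g0 by (metis diff_divide_distrib times_divide_eq_right)
    show ?thesis using g unfolding a_def[symmetric] cz .
  qed
  with I[unfolded V] show ?thesis unfolding c_def[symmetric]
    by (rule has_integral_eq[rotated])
qed

lemma one_minus_sq_pos: "0 \<le> t \<Longrightarrow> t \<le> T \<Longrightarrow> T < 1 \<Longrightarrow> 0 < 1 - (t::real)\<^sup>2"
  by (smt (verit) power_mono power_less_one_iff zero_less_numeral)

context systolic_conformal_metric
begin

lemma phi_ratio_measurable: "phi_ratio \<phi> \<in> borel_measurable borel"
proof -
  note [measurable] = borel_measurable_continuous_onI[OF continuous]
  show ?thesis unfolding phi_ratio_def[abs_def] artanh_def[abs_def] by measurable
qed

lemma continuous_on_phi_ratio:
  assumes "0 \<le> T" "T < 1"
  shows "continuous_on {0..T} (phi_ratio \<phi>)"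
proof -
  have "continuous_on {0..T} artanh" by (rule continuous_on_artanh) (use assms in auto)
  then have "continuous_on {0..T} (\<lambda>t. \<phi> (artanh t))"
    by (rule continuous_on_compose2[OF continuous]) auto
  then show ?thesis
    unfolding phi_ratio_def[abs_def] using one_minus_sq_pos[of _ T] assms
    by (intro continuous_intros) force+
qed

lemma phi_ratio_nonneg: "0 \<le> t \<Longrightarrow> t \<le> T \<Longrightarrow> T < 1 \<Longrightarrow> 0 \<le> phi_ratio \<phi> t"
  unfolding phi_ratio_def using one_minus_sq_pos positive by (simp add: less_imp_le)

lemma integral_phi_ratio_ge:
  assumes T: "0 < T" "T < 1"
  shows "T \<le> integral {0..T} (phi_ratio \<phi>)"
proof -
  have "(phi_ratio \<phi> has_integral integral {0..T} (phi_ratio \<phi>)) {0..T}"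
    using integrable_continuous_real[OF continuous_on_phi_ratio] T by auto
  note J = has_integral_mult_left[OF this, of "pi / 2"]
  have "pi / 2 * T \<le> integral {0..T} (phi_ratio \<phi>) * (pi / 2)"
  proof (rule abel_transform_inequality[where w = "\<lambda>r. r / sqrt (T\<^sup>2 - r\<^sup>2)",
        OF _ phi_ratio_measurable _ _ _ _ has_integral_div_sqrt_diff_sq[OF T(1)] has_integral_abel_kernel _ J])
    show "(\<lambda>r. r / sqrt (T\<^sup>2 - r\<^sup>2)) \<in> borel_measurable borel" by measurable
    show "0 \<le> r / sqrt (T\<^sup>2 - r\<^sup>2)" if "r \<in> {0..T}" for r
      using that by (auto intro!: divide_nonneg_nonneg power_mono)
    show "0 \<le> phi_ratio \<phi> t" if "t \<in> {0..T}" for t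
      using that T by (auto intro: phi_ratio_nonneg)
  qed (use half_great_circle_integral_ge T in auto)
  then show ?thesis by simp
qed

lemma integral_phi_ratio_weighted_ge:
  assumes T: "0 < T" "T < 1"
  defines "c \<equiv> sqrt (1 - T\<^sup>2)"
  shows "T - c * arctan (T / c) \<le> integral {0..T} (\<lambda>t. phi_ratio \<phi> t * (1 - c / sqrt (1 - t\<^sup>2)))"
proof -
  define k where "k = (\<lambda>t. 1 - c / sqrt (1 - t\<^sup>2))"
  have k_nonneg: "0 \<le> k t" if "t \<in> {0..T}" for t
  proof -
    have "c \<le> sqrt (1 - t\<^sup>2)" unfolding c_def using that by (auto intro!: power_mono)
    moreover have "0 < sqrt (1 - t\<^sup>2)" using one_minus_sq_pos[of t T] that T by auto
    ultimately show ?thesis unfolding k_def by simp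
  qed
  have "continuous_on {0..T} (\<lambda>t. phi_ratio \<phi> t * k t)"
    unfolding k_def using one_minus_sq_pos[of _ T] T
    by (intro continuous_intros continuous_on_phi_ratio) force+
  then have "((\<lambda>t. phi_ratio \<phi> t * k t) has_integral integral {0..T} (\<lambda>t. phi_ratio \<phi> t * k t)) {0..T}"
    using integrable_continuous_real by blast
  from has_integral_mult_left[OF this, of "pi / 2"]
  have J: "((\<lambda>t. phi_ratio \<phi> t * (pi / 2 * k t)) has_integral
      integral {0..T} (\<lambda>t. phi_ratio \<phi> t * k t) * (pi / 2)) {0..T}"
    by (simp add: ac_simps)
  have "pi / 2 * (T - c * arctan (T / c)) \<le> integral {0..T} (\<lambda>t. phi_ratio \<phi> t * k t) * (pi / 2)"
  proof (rule abel_transform_inequality[where w = "\<lambda>r. r * sqrt (T\<^sup>2 - r\<^sup>2) / (1 - r\<^sup>2)",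
        OF _ phi_ratio_measurable _ _ _ _ has_integral_mult_sqrt_diff_sq_div[OF T, folded c_def] _ _ J])
    show "0 \<le> r * sqrt (T\<^sup>2 - r\<^sup>2) / (1 - r\<^sup>2)" if "r \<in> {0..T}" for r
      using one_minus_sq_pos[of r T] that T by (auto intro!: power_mono)
    show "(\<lambda>r. r * sqrt (T\<^sup>2 - r\<^sup>2) / (1 - r\<^sup>2)) \<in> borel_measurable borel" by measurable
    show "((\<lambda>r. r * sqrt (T\<^sup>2 - r\<^sup>2) / (1 - r\<^sup>2) / sqrt (r\<^sup>2 - t\<^sup>2)) has_integral pi / 2 * k t) {t..T}"
      if "t \<in> {0..<T}" for t
      unfolding k_def c_def using has_integral_abel_kernel_sqrt_weight that T by auto
    show "0 \<le> phi_ratio \<phi> t" if "t \<in> {0..T}" for t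
      using that T by (auto intro: phi_ratio_nonneg)
  qed (use half_great_circle_integral_ge T k_nonneg in auto)
  then show ?thesis unfolding k_def by simp
qed

end

section \<open>The round metric phi0\<close>

lemma phi0_eq_inverse_cosh: "phi0 y = 1 / cosh y"
proof -
  have "cosh y = (exp y + inverse (exp y)) / 2" unfolding cosh_def by (simp add: exp_minus)
  moreover have "exp (2 * y) = exp y * exp y" by (simp flip: exp_add)
  moreover have "1 + exp y * exp y > 0" by (simp add: add_pos_pos)
  ultimately show ?thesis unfolding phi0_def by (simp add: field_simps)
qed

lemma phi0_pos: "0 < phi0 y"
  by (simp add: phi0_eq_inverse_cosh)

lemma continuous_on_phi0: "continuous_on S phi0"
  unfolding phi0_eq_inverse_cosh[abs_def] by (auto intro!: continuous_intros simp: less_imp_neq[symmetric])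

lemma phi0_strict_antimono: "0 \<le> x \<Longrightarrow> x < y \<Longrightarrow> phi0 y < phi0 x"
  unfolding phi0_eq_inverse_cosh using cosh_real_strict_mono[of x y] by (simp add: frac_less2)

lemma phi0_antimono: "0 \<le> x \<Longrightarrow> x \<le> y \<Longrightarrow> phi0 y \<le> phi0 x"
  using phi0_strict_antimono[of x y] by (cases "x = y") auto

lemma phi0_artanh:
  assumes t: "-1 < t" "t < (1::real)"
  shows "phi0 (artanh t) = sqrt (1 - t\<^sup>2)"
proof -
  define x where "x = (1 + t) / (1 - t)"
  have x: "0 < x" unfolding x_def using t by auto
  have "exp (artanh t) = sqrt x" "exp (2 * artanh t) = x"
    unfolding artanh_def x_def[symmetric] using x by (simp_all add: powr_half_sqrt[symmetric] powr_def)
  then have "phi0 (artanh t) = 2 * sqrt x / (1 + x)" unfolding phi0_def by simp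
  also have "\<dots> = sqrt x * sqrt ((1 - t)\<^sup>2)" unfolding x_def using t by (simp add: field_simps)
  also have "\<dots> = sqrt (1 - t\<^sup>2)"
    unfolding x_def using t by (simp add: power2_eq_square field_simps flip: real_sqrt_mult)
  finally show ?thesis .
qed

lemma phi0_eq_sqrt_tanh: "phi0 s = sqrt (1 - (tanh s)\<^sup>2)"
  using phi0_artanh[of "tanh s"] tanh_real_bounds[of s] by (simp add: artanh_tanh_real)

lemma has_integral_artanh_substitution:
  fixes f :: "real \<Rightarrow> real"
  assumes a: "0 \<le> a" and f: "continuous_on {0..a} f"
  shows "((\<lambda>t. f (artanh t) / (1 - t\<^sup>2)) has_integral integral {0..a} f) {0..tanh a}"
proof -
  have tanh_a: "0 \<le> tanh a" "tanh a < 1" using a tanh_real_lt_1 by auto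
  have "0 \<le> artanh t \<and> artanh t \<le> a" if "t \<in> {0..tanh a}" for t
  proof -
    have "1 \<le> (1 + t) / (1 - t)" "(1 + t) / (1 - t) \<le> (1 + tanh a) / (1 - tanh a)"
      using that tanh_a by (simp_all add: frac_le_eq divide_le_eq field_simps mult_mono)
    then have "0 \<le> artanh t \<and> artanh t \<le> artanh (tanh a)" unfolding artanh_def by auto
    then show ?thesis by (simp add: artanh_tanh_real)
  qed
  then have sub: "artanh ` {0..tanh a} \<subseteq> {0..a}" by auto
  have deriv: "(artanh has_field_derivative 1 / (1 - t\<^sup>2)) (at t within {0..tanh a})"
    if "t \<in> {0..tanh a}" for t
    by (rule artanh_real_has_field_derivative) (use that tanh_a in auto)
  have "((\<lambda>t. (1 / (1 - t\<^sup>2)) *\<^sub>R f (artanh t)) has_integral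
      integral {artanh 0..artanh (tanh a)} f) {0..tanh a}"
    by (rule has_integral_substitution[OF _ _ sub f deriv]) (use tanh_a a in \<open>auto simp: artanh_tanh_real\<close>)
  then show ?thesis by (simp add: artanh_tanh_real)
qed

lemma integral_mult_phi0_eq_phi_ratio:
  assumes \<phi>: "continuous_on UNIV \<phi>" and a: "0 \<le> a"
  shows "integral {0..a} (\<lambda>y. \<phi> y * phi0 y) = integral {0..tanh a} (phi_ratio \<phi>)"
proof -
  have "continuous_on {0..a} (\<lambda>y. \<phi> y * phi0 y)"
    by (intro continuous_intros continuous_on_phi0 continuous_on_subset[OF \<phi>]) auto
  from has_integral_artanh_substitution[OF a this]
  have "(phi_ratio \<phi> has_integral integral {0..a} (\<lambda>y. \<phi> y * phi0 y)) {0..tanh a}"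
  proof (rule has_integral_eq[rotated])
    fix t assume "t \<in> {0..tanh a}"
    then have t: "0 \<le> t" "t < 1" using tanh_real_lt_1[of a] by auto
    then have "0 < 1 - t\<^sup>2" using one_minus_sq_pos by blast
    then show "\<phi> (artanh t) * phi0 (artanh t) / (1 - t\<^sup>2) = phi_ratio \<phi> t"
      unfolding phi_ratio_def using t
      by (simp add: phi0_artanh divide_simps)
  qed
  then show ?thesis by (rule integral_unique[symmetric])
qed

lemma integral_eq_phi_ratio_div_sqrt:
  assumes \<phi>: "continuous_on UNIV \<phi>" and a: "0 \<le> a"
  shows "integral {0..a} \<phi> = integral {0..tanh a} (\<lambda>t. phi_ratio \<phi> t / sqrt (1 - t\<^sup>2))"
proof -
  from has_integral_artanh_substitution[OF a continuous_on_subset[OF \<phi>]]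
  have "((\<lambda>t. phi_ratio \<phi> t / sqrt (1 - t\<^sup>2)) has_integral integral {0..a} \<phi>) {0..tanh a}"
  proof (rule has_integral_eq[rotated])
    fix t assume "t \<in> {0..tanh a}"
    then have "0 < 1 - t\<^sup>2" using one_minus_sq_pos tanh_real_lt_1[of a] by auto
    then show "\<phi> (artanh t) / (1 - t\<^sup>2) = phi_ratio \<phi> t / sqrt (1 - t\<^sup>2)"
      unfolding phi_ratio_def by (simp add: divide_simps)
  qed simp
  then show ?thesis by (rule integral_unique[symmetric])
qed

lemma integral_phi0_squared:
  assumes a: "0 \<le> a"
  shows "integral {0..a} (\<lambda>y. (phi0 y)\<^sup>2) = tanh a"
proof -
  have "integral {0..tanh a} (phi_ratio phi0) = integral {0..tanh a} (\<lambda>_. 1)"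
  proof (rule integral_cong)
    fix t assume "t \<in> {0..tanh a}"
    then have t: "0 \<le> t" "t < 1" using tanh_real_lt_1[of a] by auto
    then have "0 < 1 - t\<^sup>2" using one_minus_sq_pos by blast
    then show "phi_ratio phi0 t = 1" unfolding phi_ratio_def using t by (simp add: phi0_artanh)
  qed
  then show ?thesis
    using integral_mult_phi0_eq_phi_ratio[OF continuous_on_phi0 a] a by (simp add: power2_eq_square)
qed

lemma integral_phi0:
  assumes a: "0 \<le> a"
  shows "integral {0..a} phi0 = arcsin (tanh a)"
proof -
  have tanh_a: "0 \<le> tanh a" "tanh a < 1" using a tanh_real_lt_1 by auto
  have "integral {0..tanh a} (\<lambda>t. phi_ratio phi0 t / sqrt (1 - t\<^sup>2))
      = integral {0..tanh a} (\<lambda>t. 1 / sqrt (1 - t\<^sup>2))"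
  proof (rule integral_cong)
    fix t assume "t \<in> {0..tanh a}"
    then have t: "0 \<le> t" "t < 1" using tanh_a by auto
    then have "0 < 1 - t\<^sup>2" using one_minus_sq_pos by blast
    then show "phi_ratio phi0 t / sqrt (1 - t\<^sup>2) = 1 / sqrt (1 - t\<^sup>2)"
      unfolding phi_ratio_def using t by (simp add: phi0_artanh)
  qed
  also have "\<dots> = arcsin (tanh a) - arcsin 0"
  proof (rule integral_unique, rule has_integral_arcsin_comp[where h = "\<lambda>t. t"])
    fix t assume "t \<in> {0..tanh a}"
    then have "0 < 1 - t\<^sup>2" using one_minus_sq_pos tanh_a by auto
    then show "1 - t\<^sup>2 = (sqrt (1 - t\<^sup>2))\<^sup>2" "0 \<le> sqrt (1 - t\<^sup>2)" by simp_all
  next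
    fix t assume "t \<in> {0<..<tanh a}"
    then have "0 < 1 - t\<^sup>2" using one_minus_sq_pos[of t "tanh a"] tanh_a by auto
    then show "0 < sqrt (1 - t\<^sup>2)" by simp
  qed (use tanh_a in \<open>auto intro!: derivative_eq_intros\<close>)
  finally show ?thesis using integral_eq_phi_ratio_div_sqrt[OF continuous_on_phi0 a] by simp
qed

section \<open>The four regimes of phi_beta\<close>

lemma tanh_beta0: "tanh beta0 = sqrt 2 / 2"
proof -
  have e: "exp beta0 = 1 + sqrt 2" unfolding beta0_def by (simp add: add_pos_pos)
  have ei: "inverse (1 + sqrt 2) = sqrt 2 - 1"
    by (rule inverse_unique) (simp add: algebra_simps)
  have "sinh beta0 = 1" "cosh beta0 = sqrt 2" unfolding sinh_def cosh_def exp_minus e ei by simp_all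
  then show ?thesis unfolding tanh_def by (simp add: field_simps)
qed

lemma flattened_phi0_mass_strict_antimono:
  assumes s: "0 \<le> s1" "s1 < s2" "s2 < \<beta>"
  shows "integral {0..s2} phi0 + (\<beta> - s2) * phi0 s2 < integral {0..s1} phi0 + (\<beta> - s1) * phi0 s1"
proof -
  have int: "phi0 integrable_on {a..b}" for a b by (rule integrable_continuous_real[OF continuous_on_phi0])
  have "integral {0..s2} phi0 = integral {0..s1} phi0 + integral {s1..s2} phi0"
    using Henstock_Kurzweil_Integration.integral_combine[of 0 s1 s2 phi0] int s by simp
  moreover have "integral {s1..s2} phi0 \<le> integral {s1..s2} (\<lambda>_. phi0 s1)"
    by (rule integral_le[OF int]) (use s phi0_antimono in auto)
  moreover have "(\<beta> - s2) * phi0 s2 < (\<beta> - s2) * phi0 s1"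
    using phi0_strict_antimono[of s1 s2] s by simp
  ultimately show ?thesis using s by (simp add: algebra_simps)
qed

lemma s_beta:
  assumes \<beta>: "pi / 4 < \<beta>" "\<beta> < beta0"
  shows "0 < s_beta \<beta>" "s_beta \<beta> < \<beta>"
    and "integral {0..s_beta \<beta>} phi0 + (\<beta> - s_beta \<beta>) * phi0 (s_beta \<beta>) = pi / 4"
proof -
  define H where "H = (\<lambda>s. integral {0..s} phi0 + (\<beta> - s) * phi0 s)"
  have H: "H s = arcsin (tanh s) + (\<beta> - s) * phi0 s" if "0 \<le> s" for s
    unfolding H_def using integral_phi0[OF that] by simp
  have cont: "continuous_on {0..\<beta>} (\<lambda>s. arcsin (tanh s) + (\<beta> - s) * phi0 s)"
    using tanh_real_bounds by (auto intro!: continuous_intros continuous_on_phi0 simp: less_imp_le)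
  have H\<beta>: "arcsin (tanh \<beta>) < pi / 4"
  proof -
    have "tanh \<beta> < tanh beta0" using \<beta>(2) by simp
    then have "tanh \<beta> < sqrt 2 / 2" unfolding tanh_beta0 .
    moreover have "\<bar>sqrt 2 / 2\<bar> \<le> (1::real)" using real_sqrt_le_mono[of 2 4] by (simp add: real_sqrt_four)
    moreover have "\<bar>tanh \<beta>\<bar> \<le> 1" using tanh_real_bounds[of \<beta>] by (simp add: abs_le_iff less_imp_le)
    ultimately have "arcsin (tanh \<beta>) < arcsin (sqrt 2 / 2)" by (simp add: arcsin_less_mono)
    also have "arcsin (sqrt 2 / 2) = pi / 4" using arcsin_sin[of "pi / 4"] by (simp add: sin_45)
    finally show ?thesis .
  qed
  have H0: "phi0 0 = 1" unfolding phi0_def by simp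
  have "\<exists>s. 0 \<le> s \<and> s \<le> \<beta> \<and> arcsin (tanh s) + (\<beta> - s) * phi0 s = pi / 4"
    by (rule IVT2'[OF _ _ _ cont]) (use H\<beta> H0 \<beta>(1) pi_gt_zero in \<open>auto simp del: pi_gt_zero\<close>)
  then obtain s where s: "0 \<le> s" "s \<le> \<beta>" "arcsin (tanh s) + (\<beta> - s) * phi0 s = pi / 4"
    by blast
  then have "H s = pi / 4" using H by simp
  have "s \<noteq> 0" "s \<noteq> \<beta>" using s(3) H0 H\<beta> \<beta>(1) by auto
  with s have s': "0 < s" "s < \<beta>" by auto
  have "\<exists>!s. 0 < s \<and> s < \<beta> \<and> H s = pi / 4"
  proof (rule ex1I[of _ s])
    fix s' assume "0 < s' \<and> s' < \<beta> \<and> H s' = pi / 4"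
    with \<open>H s = pi / 4\<close> s' show "s' = s"
      using flattened_phi0_mass_strict_antimono[of s s' \<beta>] flattened_phi0_mass_strict_antimono[of s' s \<beta>]
      unfolding H_def by (cases s s' rule: linorder_cases) auto
  qed (use \<open>H s = pi / 4\<close> s' in auto)
  from theI'[OF this] show "0 < s_beta \<beta>" "s_beta \<beta> < \<beta>"
    "integral {0..s_beta \<beta>} phi0 + (\<beta> - s_beta \<beta>) * phi0 (s_beta \<beta>) = pi / 4"
    unfolding s_beta_def H_def by auto
qed

lemma integral_piecewise:
  fixes f g h :: "real \<Rightarrow> real"
  assumes "a \<le> s" "s \<le> b" and f: "continuous_on {a..s} f" and g: "continuous_on {s..b} g"
    and "\<And>x. x \<in> {a..s} \<Longrightarrow> h x = f x" "\<And>x. x \<in> {s<..b} \<Longrightarrow> h x = g x"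
  shows "integral {a..b} h = integral {a..s} f + integral {s..b} g"
proof -
  have "(h has_integral integral {a..s} f) {a..s}"
    using integrable_integral[OF integrable_continuous_real[OF f]] by (rule has_integral_eq[rotated]) (simp add: assms)
  moreover have "(h has_integral integral {s..b} g) {s..b}"
    by (rule has_integral_spike_finite[of "{s}", OF _ _ integrable_integral[OF integrable_continuous_real[OF g]]])
       (auto simp: assms)
  ultimately show ?thesis using has_integral_combine assms(1,2) integral_unique by blast
qed

context systolic_conformal_metric
begin

lemma integral_phi0_squared_le:
  assumes "0 < a"
  shows "integral {0..a} (\<lambda>y. (phi0 y)\<^sup>2) \<le> integral {0..a} (\<lambda>y. \<phi> y * phi0 y)"
  using integral_phi_ratio_ge[of "tanh a"] assms tanh_real_lt_1[of a]
  by (simp add: integral_phi0_squared integral_mult_phi0_eq_phi_ratio[OF continuous])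

lemma integral_phi_phi0_flattened_ge:
  assumes s: "0 < s"
  shows "tanh s - phi0 s * arcsin (tanh s) \<le> integral {0..s} (\<lambda>y. \<phi> y * phi0 y) - phi0 s * integral {0..s} \<phi>"
proof -
  define T where "T = tanh s"
  have T: "0 < T" "T < 1" unfolding T_def using s tanh_real_lt_1 by auto
  have c: "phi0 s = sqrt (1 - T\<^sup>2)" unfolding T_def by (rule phi0_eq_sqrt_tanh)
  have "phi_ratio \<phi> integrable_on {0..T}" "(\<lambda>t. phi0 s * (phi_ratio \<phi> t / sqrt (1 - t\<^sup>2))) integrable_on {0..T}"
    using one_minus_sq_pos[of _ T] T
    by (intro integrable_continuous_real continuous_intros continuous_on_phi_ratio; force)+
  then have "integral {0..T} (\<lambda>t. phi_ratio \<phi> t - phi0 s * (phi_ratio \<phi> t / sqrt (1 - t\<^sup>2)))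
      = integral {0..T} (phi_ratio \<phi>) - phi0 s * integral {0..T} (\<lambda>t. phi_ratio \<phi> t / sqrt (1 - t\<^sup>2))"
    unfolding integral_mult_right[symmetric] by (rule integral_diff)
  moreover have "phi_ratio \<phi> t - phi0 s * (phi_ratio \<phi> t / sqrt (1 - t\<^sup>2))
      = phi_ratio \<phi> t * (1 - phi0 s / sqrt (1 - t\<^sup>2))" for t
    by (simp add: algebra_simps)
  ultimately have "integral {0..T} (\<lambda>t. phi_ratio \<phi> t * (1 - phi0 s / sqrt (1 - t\<^sup>2)))
      = integral {0..T} (phi_ratio \<phi>) - phi0 s * integral {0..T} (\<lambda>t. phi_ratio \<phi> t / sqrt (1 - t\<^sup>2))"
    by simp
  also have "\<dots> = integral {0..s} (\<lambda>y. \<phi> y * phi0 y) - phi0 s * integral {0..s} \<phi>"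
    unfolding T_def using s
    by (simp add: integral_mult_phi0_eq_phi_ratio[OF continuous] integral_eq_phi_ratio_div_sqrt[OF continuous])
  moreover have "arcsin T = arctan (T / phi0 s)" unfolding c using T by (simp add: arcsin_arctan)
  ultimately show ?thesis
    using integral_phi_ratio_weighted_ge[OF T] unfolding c[symmetric] T_def[symmetric] by simp
qed

lemma phi_beta_ineq_small:
  assumes "\<beta> \<le> pi / 4"
  shows "integral {0..\<beta>} (\<lambda>y. (phi_beta \<beta> y)\<^sup>2) \<le> integral {0..\<beta>} (\<lambda>y. \<phi> y * phi_beta \<beta> y)"
proof -
  define c where "c = pi / (4 * \<beta>)"
  have "phi_beta \<beta> y = c" for y unfolding phi_beta_def c_def using assms by simp
  moreover have "\<beta> * c\<^sup>2 = pi / 4 * c" unfolding c_def using beta_pos by (simp add: power2_eq_square)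
  moreover have "pi / 4 * c \<le> integral {0..\<beta>} \<phi> * c"
    using integral_phi_ge beta_pos unfolding c_def by (intro mult_right_mono) auto
  ultimately show ?thesis using beta_pos by simp
qed

lemma phi_beta_ineq_flat_top:
  assumes \<beta>: "pi / 4 < \<beta>" "\<beta> < beta0"
  shows "integral {0..\<beta>} (\<lambda>y. (phi_beta \<beta> y)\<^sup>2) \<le> integral {0..\<beta>} (\<lambda>y. \<phi> y * phi_beta \<beta> y)"
proof -
  define s c where "s = s_beta \<beta>" and "c = phi0 (s_beta \<beta>)"
  note s = s_beta[OF \<beta>, folded s_def c_def]
  have phi_beta: "phi_beta \<beta> y = (if y \<le> s then phi0 y else c)" for y
    unfolding phi_beta_def s_def c_def using \<beta> by simp
  have "integral {0..\<beta>} (\<lambda>y. \<phi> y * phi_beta \<beta> y) = integral {0..s} (\<lambda>y. \<phi> y * phi0 y) + c * integral {s..\<beta>} \<phi>"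
    using integral_piecewise[of 0 s \<beta> "\<lambda>y. \<phi> y * phi0 y" "\<lambda>y. c * \<phi> y"] s
    by (simp add: phi_beta continuous_on_phi continuous_on_phi0 continuous_on_mult continuous_on_mult_left
        mult.commute)
  moreover have "integral {0..\<beta>} (\<lambda>y. (phi_beta \<beta> y)\<^sup>2) = tanh s + (\<beta> - s) * c\<^sup>2"
    using integral_piecewise[of 0 s \<beta> "\<lambda>y. (phi0 y)\<^sup>2" "\<lambda>y. c\<^sup>2"] s
    by (simp add: phi_beta integral_phi0_squared continuous_on_phi0 continuous_on_power)
  moreover have "integral {0..\<beta>} \<phi> = integral {0..s} \<phi> + integral {s..\<beta>} \<phi>"
    using Henstock_Kurzweil_Integration.integral_combine[of 0 s \<beta> \<phi>] integrable_phi s by simp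
  moreover have "c * (pi / 4) \<le> c * integral {0..\<beta>} \<phi>"
    using integral_phi_ge phi0_pos[of s] unfolding c_def s_def by simp
  \<comment> \<open>the defining equation of s_beta, which makes the vertical-loop bound fit exactly\<close>
  moreover have "pi / 4 = arcsin (tanh s) + (\<beta> - s) * c"
    using s(3) integral_phi0[of s] s(1) unfolding c_def s_def by simp
  ultimately show ?thesis
    using integral_phi_phi0_flattened_ge[OF s(1)] unfolding c_def s_def
    by (simp add: algebra_simps power2_eq_square)
qed

lemma phi_beta_ineq_phi0:
  assumes "pi / 4 < \<beta>" "beta0 \<le> \<beta>" "\<beta> \<le> beta1"
  shows "integral {0..\<beta>} (\<lambda>y. (phi_beta \<beta> y)\<^sup>2) \<le> integral {0..\<beta>} (\<lambda>y. \<phi> y * phi_beta \<beta> y)"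
proof -
  have "phi_beta \<beta> y = phi0 y" for y unfolding phi_beta_def using assms by simp
  then show ?thesis using integral_phi0_squared_le[OF beta_pos] by simp
qed

lemma phi_beta_ineq_large:
  assumes \<beta>: "pi / 4 < \<beta>" "beta0 \<le> \<beta>" "beta1 < \<beta>"
  shows "integral {0..\<beta>} (\<lambda>y. (phi_beta \<beta> y)\<^sup>2) \<le> integral {0..\<beta>} (\<lambda>y. \<phi> y * phi_beta \<beta> y)"
proof -
  have beta1: "0 < beta1" unfolding beta1_def by (rule ln_gt_zero) (simp add: add_pos_nonneg)
  have phi_beta: "phi_beta \<beta> y = (if y \<le> beta1 then phi0 y else 1 / 2)" for y
    unfolding phi_beta_def using \<beta> by simp
  have "integral {0..\<beta>} (\<lambda>y. \<phi> y * phi_beta \<beta> y)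
      = integral {0..beta1} (\<lambda>y. \<phi> y * phi0 y) + integral {beta1..\<beta>} (\<lambda>y. \<phi> y / 2)"
    using integral_piecewise[of 0 beta1 \<beta> "\<lambda>y. \<phi> y * phi0 y" "\<lambda>y. \<phi> y / 2"] beta1 \<beta>
    by (simp add: phi_beta continuous_on_phi continuous_on_phi0 continuous_on_mult continuous_on_divide)
  moreover have "integral {0..\<beta>} (\<lambda>y. (phi_beta \<beta> y)\<^sup>2)
      = integral {0..beta1} (\<lambda>y. (phi0 y)\<^sup>2) + integral {beta1..\<beta>} (\<lambda>y. 1 / 4)"
    using integral_piecewise[of 0 beta1 \<beta> "\<lambda>y. (phi0 y)\<^sup>2" "\<lambda>y. 1 / 4"] beta1 \<beta>
    by (simp add: phi_beta continuous_on_phi0 continuous_on_power power_divide)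
  moreover have "integral {beta1..\<beta>} (\<lambda>y. 1 / 4) \<le> integral {beta1..\<beta>} (\<lambda>y. \<phi> y / 2)"
    using phi_ge_half by (intro integral_le) (auto intro!: integrable_continuous_real continuous_intros continuous_on_phi)
  ultimately show ?thesis using integral_phi0_squared_le[OF beta1] by linarith
qed

end

theorem lemma2p4:
  fixes \<beta> :: real and \<phi> :: "real \<Rightarrow> real"
  assumes "\<beta> > 0"
    and "smooth_fun \<phi>"
    and "\<forall>y. \<phi> y > 0"
    and "H_invariant \<beta> \<phi>"
    and "sys \<beta> \<phi> = pi"
  shows "integral {0..\<beta>} (\<lambda>y. \<phi> y * phi_beta \<beta> y) \<ge> integral {0..\<beta>} (\<lambda>y. (phi_beta \<beta> y)\<^sup>2)"
proof -
  interpret systolic_conformal_metric \<beta> \<phi>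
  proof
    show "continuous_on UNIV \<phi>" using assms(2) by (rule smooth_fun_imp_continuous)
    show "\<phi> (- y) = \<phi> y" "\<phi> (y + 2 * \<beta>) = \<phi> y" for y
      using assms(4) unfolding H_invariant_def by metis+
    show "pi \<le> l" if "noncontr_loop \<beta> \<gamma>" "conf_length \<phi> \<gamma> l" for \<gamma> l
      using sys_le_conf_length[OF _ that] assms(3,5) by simp
  qed (use assms(1,3) in auto)
  consider "\<beta> \<le> pi / 4" | "pi / 4 < \<beta>" "\<beta> < beta0" | "pi / 4 < \<beta>" "beta0 \<le> \<beta>" "\<beta> \<le> beta1"
    | "pi / 4 < \<beta>" "beta0 \<le> \<beta>" "beta1 < \<beta>"
    by linarith
  then show ?thesis
    using phi_beta_ineq_small phi_beta_ineq_flat_top phi_beta_ineq_phi0 phi_beta_ineq_large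
    by cases auto
qed

end
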